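(* For $\tau,\kappa\in\mathbb{R}$ and integer $n\ge0$, let $$\mu_{2n}(\tau;\kappa)=\int_{-\infty}^{\infty}x^{2n}\exp\{-(x^6-\tau x^4+\kappa\tau^2x^2)\}\,dx.$$ Then $$\mu_{2n}(\tau;\kappa)=\tfrac13\sum_{j=0}^{\infty}\left\{\frac{\Gamma\left(\tfrac23j+\tfrac13n+\tfrac16\right)}{\left(\tfrac12\right)_j}\tau^jL_j^{(-1/2)}(\zeta)-\kappa\frac{\Gamma\left(\tfrac23j+\tfrac13n+\tfrac12\right)}{\left(\tfrac32\right)_j}\tau^{j+2}L_j^{(1/2)}(\zeta)\right\},$$ where $\zeta=-\tfrac14\kappa^2\tau^3$.
   Context: $L_j^{(\alpha)}$ denotes the (standard, generalised) Laguerre polynomial of degree $j$ and parameter $\alpha$. $(a)_j$ denotes the Pochhammer symbol. *)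

theory Defs
  imports "HOL-Analysis.Analysis"
begin

definition laguerre :: "nat \<Rightarrow> real \<Rightarrow> real \<Rightarrow> real" where
  "laguerre j \<alpha> x = (\<Sum>k\<le>j. (-1)^k * ((real j + \<alpha>) gchoose (j - k)) * x^k / fact k)"

definition mu :: "nat \<Rightarrow> real \<Rightarrow> real \<Rightarrow> real" where
  "mu n \<tau> \<kappa> = integral UNIV (\<lambda>x::real. x^(2*n) * exp (-(x^6 - \<tau>*x^4 + \<kappa>*\<tau>^2*x^2)))"

end

theory Submission
  imports Defs "HOL-Real_Asymp.Real_Asymp"
begin

text \<open>Write the integrand as x^(2n) e^(-x^6) exp(\<tau> x^4) exp(-\<kappa> \<tau>^2 x^2) and form the Cauchy
  product of the two exponential series, taking the terms of the second one in pairs of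
  consecutive degrees: the j-th term is then a combination of x^(4j) and x^(4j+2) only.
  Integrating term by term (dominated convergence, the same series for |\<tau>| and -|\<kappa>| being
  an integrable majorant) turns these monomials into \<Gamma>((2n+4j+1)/6)/3 and \<Gamma>((2n+4j+3)/6)/3.
  By (2k)! = 4^k k! (1/2)_k and (2k+1)! = 4^k k! (3/2)_k the finite sums left in the coefficients
  are L_j^(-1/2)(\<zeta>)/(1/2)_j and L_j^(1/2)(\<zeta>)/(3/2)_j.\<close>

lemma laguerre_div_pochhammer:
  fixes \<alpha> x :: real
  assumes "\<alpha> > -1"
  shows "laguerre j \<alpha> x / pochhammer (\<alpha> + 1) j
           = (\<Sum>k\<le>j. (-x)^k / (fact k * fact (j - k) * pochhammer (\<alpha> + 1) k))"
  unfolding laguerre_def sum_divide_distrib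
proof (rule sum.cong[OF refl])
  fix k assume "k \<in> {..j}"
  then have kj: "k \<le> j" by simp
  have binom: "(real j + \<alpha>) gchoose (j - k) = pochhammer (\<alpha> + 1 + real k) (j - k) / fact (j - k)"
    using kj by (simp add: gbinomial_pochhammer' of_nat_diff algebra_simps)
  have split: "pochhammer (\<alpha> + 1) j = pochhammer (\<alpha> + 1) k * pochhammer (\<alpha> + 1 + real k) (j - k)"
    using pochhammer_product[OF kj, of "\<alpha> + 1"] by simp
  have "pochhammer (\<alpha> + 1) k > 0" "pochhammer (\<alpha> + 1 + real k) (j - k) > 0"
    using assms by (auto intro!: pochhammer_pos)
  then show "(-1)^k * ((real j + \<alpha>) gchoose (j - k)) * x^k / fact k / pochhammer (\<alpha> + 1) j
           = (-x)^k / (fact k * fact (j - k) * pochhammer (\<alpha> + 1) k)"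
    unfolding binom split by (simp add: power_minus' field_simps)
qed

lemma fact_double_pochhammer_half: "(fact (2 * k) :: real) = 4^k * fact k * pochhammer (1/2) k"
  using pochhammer_double[of "1/2 :: real" k] by (simp add: pochhammer_fact power_mult)

lemma fact_double_Suc_pochhammer_three_halves:
  "(fact (2 * k + 1) :: real) = 4^k * fact k * pochhammer (3/2) k"
proof -
  have "fact (2 * k + 1) = (pochhammer 2 (2 * k) :: real)"
    using pochhammer_rec[of "1::real" "2 * k"] by (simp add: pochhammer_fact)
  also have "\<dots> = 4^k * pochhammer 1 k * pochhammer (3/2) k"
    using pochhammer_double[of "1 :: real" k] by (simp add: power_mult)
  finally show ?thesis by (simp add: pochhammer_fact)
qed

definition pair_coeff :: "nat \<Rightarrow> nat \<Rightarrow> real \<Rightarrow> real" where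
  "pair_coeff r j z = (\<Sum>k\<le>j. z^k / (fact (j - k) * fact (2 * k + r)))"

lemma laguerre_minus_half_eq_pair_coeff:
  "laguerre j (-1/2) (-z/4) / pochhammer (1/2) j = pair_coeff 0 j z"
proof -
  have "laguerre j (-1/2) (-z/4) / pochhammer (1/2) j
          = (\<Sum>k\<le>j. (z/4)^k / (fact k * fact (j - k) * pochhammer (1/2) k))"
    using laguerre_div_pochhammer[of "-1/2" j "-z/4"] by simp
  also have "\<dots> = pair_coeff 0 j z"
    unfolding pair_coeff_def add_0_right fact_double_pochhammer_half
    by (intro sum.cong) (simp_all add: power_divide field_simps)
  finally show ?thesis .
qed

lemma laguerre_plus_half_eq_pair_coeff:
  "laguerre j (1/2) (-z/4) / pochhammer (3/2) j = pair_coeff 1 j z"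
proof -
  have "laguerre j (1/2) (-z/4) / pochhammer (3/2) j
          = (\<Sum>k\<le>j. (z/4)^k / (fact k * fact (j - k) * pochhammer (3/2) k))"
    using laguerre_div_pochhammer[of "1/2" j "-z/4"] by simp
  also have "\<dots> = pair_coeff 1 j z"
    unfolding pair_coeff_def fact_double_Suc_pochhammer_three_halves
    by (intro sum.cong) (simp_all add: power_divide field_simps)
  finally show ?thesis .
qed

lemma abs_pair_coeff_le: "\<bar>pair_coeff r j z\<bar> \<le> pair_coeff r j \<bar>z\<bar>"
  unfolding pair_coeff_def by (rule order.trans[OF sum_abs]) (simp add: abs_mult power_abs)

lemma exp_sums_paired:
  fixes v :: real
  shows "(\<lambda>c. v^(2*c) / fact (2*c) + v^(2*c+1) / fact (2*c+1)) sums exp v"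
proof -
  have "(\<lambda>c. \<Sum>m\<in>{c*2..<c*2+2}. v^m /\<^sub>R fact m) sums exp v"
    by (rule sums_group[OF exp_converges]) simp
  moreover have "{c*2..<c*2+2} = {2*c, 2*c+1}" for c :: nat
    by auto
  ultimately show ?thesis
    by (simp add: divide_inverse mult.commute)
qed

lemma exp_add_sums_paired_Cauchy_product:
  fixes u v :: real
  shows "(\<lambda>j. \<Sum>c\<le>j. (v^(2*c) / fact (2*c) + v^(2*c+1) / fact (2*c+1)) * (u^(j-c) / fact (j-c)))
           sums exp (u + v)"
proof -
  define a where "a i = u^i / fact i" for i
  define b where "b c = v^(2*c) / fact (2*c) + v^(2*c+1) / fact (2*c+1)" for c
  have "summable (\<lambda>i. \<bar>u\<bar>^i /\<^sub>R fact i)"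
    using exp_converges by (rule sums_summable)
  then have a_abs: "summable (\<lambda>i. norm (a i))"
    by (simp add: a_def power_abs divide_inverse mult.commute abs_mult)
  have b_abs: "summable (\<lambda>c. norm (b c))"
  proof (rule summable_comparison_test)
    show "summable (\<lambda>c. \<bar>v\<bar>^(2*c) / fact (2*c) + \<bar>v\<bar>^(2*c+1) / fact (2*c+1))"
      using exp_sums_paired by (rule sums_summable)
    show "\<exists>N. \<forall>c\<ge>N. norm (norm (b c)) \<le> \<bar>v\<bar>^(2*c) / fact (2*c) + \<bar>v\<bar>^(2*c+1) / fact (2*c+1)"
      by (auto simp: b_def power_abs abs_mult intro!: exI[of _ 0] order.trans[OF abs_triangle_ineq])
  qed
  have "(\<lambda>j. \<Sum>c\<le>j. b c * a (j - c)) sums ((\<Sum>c. b c) * (\<Sum>i. a i))"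
    by (rule Cauchy_product_sums[OF b_abs a_abs])
  moreover have "(\<Sum>c. b c) = exp v"
    using exp_sums_paired by (simp add: b_def sums_iff)
  moreover have "(\<Sum>i. a i) = exp u"
    using exp_converges[of u] by (simp add: a_def sums_iff divide_inverse mult.commute)
  ultimately show ?thesis
    by (simp add: a_def b_def exp_add mult.commute)
qed

lemma exp_quadratic_sums_pair_coeff:
  fixes \<tau> \<kappa> y :: real
  shows "(\<lambda>j. \<tau>^j * pair_coeff 0 j (\<kappa>^2 * \<tau>^3) * y^(2*j)
              - \<kappa> * \<tau>^(j+2) * pair_coeff 1 j (\<kappa>^2 * \<tau>^3) * y^(2*j+1))
           sums exp (\<tau> * y^2 - \<kappa> * \<tau>^2 * y)"
proof -
  define u where "u = \<tau> * y^2"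
  define v where "v = - \<kappa> * \<tau>^2 * y"
  have "(v^(2*c) / fact (2*c) + v^(2*c+1) / fact (2*c+1)) * (u^(j-c) / fact (j-c))
          = \<tau>^j * ((\<kappa>^2 * \<tau>^3)^c / (fact (j-c) * fact (2*c))) * y^(2*j)
            - \<kappa> * \<tau>^(j+2) * ((\<kappa>^2 * \<tau>^3)^c / (fact (j-c) * fact (2*c+1))) * y^(2*j+1)"
    if "c \<le> j" for c j
  proof -
    obtain d where j: "j = c + d"
      using \<open>c \<le> j\<close> le_Suc_ex by blast
    have "v^2 = \<kappa>^2 * \<tau>^3 * \<tau> * y^2"
      by (simp add: v_def power_mult_distrib power2_eq_square power3_eq_cube)
    then have v_even: "v^(2*c) = (\<kappa>^2 * \<tau>^3)^c * \<tau>^c * y^(2*c)"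
      by (simp add: power_mult power_mult_distrib)
    have v_odd: "v^(2*c+1) = - \<kappa> * \<tau>^2 * y * ((\<kappa>^2 * \<tau>^3)^c * \<tau>^c * y^(2*c))"
      using v_even by (simp add: v_def)
    have u_pow: "u^d = \<tau>^d * y^(2*d)"
      by (simp add: u_def power_mult_distrib power_mult)
    show ?thesis
      unfolding j diff_add_inverse v_even v_odd u_pow
      by (simp add: power_add power2_eq_square field_simps del: fact_Suc)
  qed
  then have "(\<Sum>c\<le>j. (v^(2*c) / fact (2*c) + v^(2*c+1) / fact (2*c+1)) * (u^(j-c) / fact (j-c)))
          = \<tau>^j * pair_coeff 0 j (\<kappa>^2 * \<tau>^3) * y^(2*j)
            - \<kappa> * \<tau>^(j+2) * pair_coeff 1 j (\<kappa>^2 * \<tau>^3) * y^(2*j+1)" for j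
    by (simp add: pair_coeff_def sum_subtractf sum_distrib_left sum_distrib_right)
  moreover have "u + v = \<tau> * y^2 - \<kappa> * \<tau>^2 * y"
    by (simp add: u_def v_def)
  ultimately show ?thesis
    using exp_add_sums_paired_Cauchy_product[of v u] by simp
qed

lemma Gamma_set_integral_real:
  fixes s :: real
  assumes "s > 0"
  shows "set_integrable lborel {0<..} (\<lambda>t. t powr (s - 1) / exp t)"
    and "(LINT t:{0<..}|lborel. t powr (s - 1) / exp t) = Gamma s"
proof -
  have integral: "((\<lambda>t. t powr (s - 1) / exp t) has_integral Gamma s) {0<..}"
    using Gamma_integral_real[OF assms]
      has_integral_interior[of "{0::real..}" "\<lambda>t. t powr (s - 1) / exp t" "Gamma s"] by simp
  then have "(\<lambda>t. t powr (s - 1) / exp t) absolutely_integrable_on {0<..}"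
    by (intro nonnegative_absolutely_integrable_1) auto
  then show integrable: "set_integrable lborel {0<..} (\<lambda>t. t powr (s - 1) / exp t)"
    unfolding set_integrable_def by (subst (asm) integrable_completion) auto
  show "(LINT t:{0<..}|lborel. t powr (s - 1) / exp t) = Gamma s"
    using set_borel_integral_eq_integral(2)[OF integrable] integral by (simp add: integral_unique)
qed

lemma set_integral_power_exp_neg_power:
  fixes k p :: nat
  assumes "p > 0"
  shows "set_integrable lborel {0<..} (\<lambda>x::real. x^k * exp (-(x^p)))"
    and "(LINT x:{0<..}|lborel. x^k * exp (-(x^p))) = Gamma ((real k + 1) / real p) / real p"
proof -
  define s where "s = (real k + 1) / real p"
  define f where "f = (\<lambda>x::real. x^k * exp (-(x^p)))"
  define g where "g = (\<lambda>t::real. t powr (1 / real p))"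
  define g' where "g' = (\<lambda>t::real. 1 / real p * t powr (1 / real p - 1))"
  have "s > 0"
    using assms by (simp add: s_def)
  have half_line: "einterval 0 \<infinity> = {0::real<..}"
    by (simp add: zero_ereal_def)
  have subst: "f (g t) * g' t = 1 / real p * (t powr (s - 1) / exp t)" if "t > 0" for t
  proof -
    have "g t ^ k = t powr (real k / real p)" "g t ^ p = t"
      using that assms by (simp_all add: g_def powr_realpow[symmetric] powr_powr)
    moreover have "t powr (real k / real p) * t powr (1 / real p - 1) = t powr (s - 1)"
      using that assms by (simp add: powr_add[symmetric] s_def add_divide_distrib add_diff_eq)
    ultimately show ?thesis
      by (simp add: f_def g'_def exp_minus field_simps)
  qed
  have "set_integrable lborel {0<..} (\<lambda>t. 1 / real p * (t powr (s - 1) / exp t))"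
    using Gamma_set_integral_real(1)[OF \<open>s > 0\<close>] by (rule set_integrable_mult_right)
  then have subst_integrable: "set_integrable lborel (einterval 0 \<infinity>) (\<lambda>t. f (g t) * g' t)"
    unfolding half_line by (subst set_integrable_cong[OF refl refl subst]) auto
  have "((\<lambda>t. t powr (1 / real p)) \<longlongrightarrow> 0) (at_right 0)"
    using assms by (intro tendsto_zero_powrI tendsto_ident_at tendsto_const)
                   (auto simp: eventually_at_right_field intro: gt_ex)
  moreover have "filterlim (\<lambda>t. t powr (1 / real p)) at_top at_top"
    using assms by (intro real_powr_at_top) simp
  ultimately have "set_integrable lborel (einterval 0 \<infinity>) f
      \<and> (LBINT x=0..\<infinity>. f x) = (LBINT t=0..\<infinity>. f (g t) * g' t)"
    using subst_integrable assms
    by (intro conjI interval_integral_substitution_nonneg[of 0 \<infinity> g g' f 0 \<infinity>])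
       (auto simp: g_def f_def g'_def ereal_tendsto_simps zero_ereal_def
             intro!: derivative_eq_intros continuous_intros)
  moreover have "(LBINT t=0..\<infinity>. f (g t) * g' t) = Gamma s / real p"
  proof -
    have "(LBINT t=0..\<infinity>. f (g t) * g' t) = (LINT t:{0<..}|lborel. 1 / real p * (t powr (s - 1) / exp t))"
      unfolding interval_lebesgue_integral_def half_line
      by (auto simp: set_lebesgue_integral_def indicator_def subst intro!: Bochner_Integration.integral_cong)
    also have "\<dots> = Gamma s / real p"
      unfolding set_integral_mult_right using Gamma_set_integral_real(2)[OF \<open>s > 0\<close>] by simp
    finally show ?thesis .
  qed
  ultimately show "set_integrable lborel {0<..} (\<lambda>x::real. x^k * exp (-(x^p)))"
    and "(LINT x:{0<..}|lborel. x^k * exp (-(x^p))) = Gamma ((real k + 1) / real p) / real p"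
    unfolding interval_lebesgue_integral_def half_line by (simp_all add: f_def s_def zero_ereal_def)
qed

lemma lborel_integral_even:
  fixes f :: "real \<Rightarrow> real"
  assumes f_borel: "f \<in> borel_measurable borel"
    and even: "\<And>x. f (-x) = f x"
    and half: "set_integrable lborel {0<..} f"
  shows "integrable lborel f"
    and "integral\<^sup>L lborel f = 2 * (LINT x:{0<..}|lborel. f x)"
proof -
  define p where "p = (\<lambda>x::real. indicator {0<..} x * f x)"
  have p: "integrable lborel p"
    using half by (simp add: set_integrable_def p_def)
  have p_reflected: "integrable lborel (\<lambda>x. p (0 + (-1) * x))"
    using p lborel_integrable_real_affine_iff[of "-1" p 0] by simp
  have f_eq: "AE x in lborel. p x + p (0 + (-1) * x) = f x"
    using AE_lborel_singleton[of 0] by eventually_elim (auto simp: p_def even indicator_def)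
  have sum_integrable: "integrable lborel (\<lambda>x. p x + p (0 + (-1) * x))"
    using p p_reflected by simp
  show "integrable lborel f"
    using integrable_cong_AE_imp[OF sum_integrable _ f_eq] f_borel by simp
  have "integral\<^sup>L lborel f = integral\<^sup>L lborel (\<lambda>x. p x + p (0 + (-1) * x))"
    using integral_cong_AE[OF _ _ f_eq] f_borel p_reflected p by (simp add: borel_measurable_integrable)
  also have "\<dots> = 2 * integral\<^sup>L lborel p"
    using p p_reflected lborel_integral_real_affine[of "-1" p 0] by simp
  finally show "integral\<^sup>L lborel f = 2 * (LINT x:{0<..}|lborel. f x)"
    by (simp add: set_lebesgue_integral_def p_def)
qed

lemma lborel_integral_power_exp_neg_even_power:
  fixes k m :: nat
  assumes "m > 0"
  shows "integrable lborel (\<lambda>x::real. x^(2*k) * exp (-(x^(2*m))))"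
    and "(\<integral>x. x^(2*k) * exp (-(x^(2*m))) \<partial>lborel) = Gamma ((2 * real k + 1) / (2 * real m)) / real m"
proof -
  have even: "(-x)^(2*k) * exp (-((-x)^(2*m))) = x^(2*k) * exp (-(x^(2*m)))" for x :: real
    by simp
  note half = set_integral_power_exp_neg_power[of "2*m" "2*k"]
  show "integrable lborel (\<lambda>x::real. x^(2*k) * exp (-(x^(2*m))))"
    using lborel_integral_even(1)[OF _ even half(1)] assms by simp
  show "(\<integral>x. x^(2*k) * exp (-(x^(2*m))) \<partial>lborel) = Gamma ((2 * real k + 1) / (2 * real m)) / real m"
    using lborel_integral_even(2)[OF _ even half(1)] half(2) assms by simp
qed

lemma mult_power_le_half_cube:
  fixes c y :: real
  assumes "c \<ge> 0" "y \<ge> 0" "i \<le> 2"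
  shows "c * y^i \<le> y^3 / 2 + c * (1 + 2 * c)^i"
proof (cases "y \<le> 1 + 2 * c")
  case True
  then have "c * y^i \<le> c * (1 + 2 * c)^i"
    using assms by (intro mult_left_mono power_mono) auto
  moreover have "0 \<le> y^3"
    using assms by simp
  ultimately show ?thesis
    by linarith
next
  case False
  then have "y^i \<le> y^2"
    using assms by (intro power_increasing) auto
  then have "c * y^i \<le> c * y^2"
    using assms by (intro mult_left_mono) auto
  also have "\<dots> \<le> y / 2 * y^2"
    using False assms by (intro mult_right_mono) auto
  also have "\<dots> = y^3 / 2"
    by (simp add: power2_eq_square power3_eq_cube)
  finally have "c * y^i \<le> y^3 / 2" .
  moreover have "0 \<le> c * (1 + 2 * c)^i"
    using assms by simp
  ultimately show ?thesis
    by linarith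
qed

lemma integrable_power_exp_neg_sextic:
  fixes a b :: real
  assumes "a \<ge> 0" "b \<ge> 0"
  shows "integrable lborel (\<lambda>x. x^(2*n) * exp (-(x^6 - a * x^4 - b * x^2)))"
proof (rule Bochner_Integration.integrable_bound)
  define C where "C = a * (1 + 2 * a)^2 + (b + 1) * (1 + 2 * (b + 1))"
  show "integrable lborel (\<lambda>x::real. exp C * (x^(2*n) * exp (-(x^(2*1)))))"
    using lborel_integral_power_exp_neg_even_power(1)[of 1 n] by (intro integrable_mult_right) simp
  show "AE x in lborel. norm (x^(2*n) * exp (-(x^6 - a * x^4 - b * x^2)))
                          \<le> norm (exp C * (x^(2*n) * exp (-(x^(2*1)))))"
  proof (rule AE_I2)
    fix x :: real
    have "a * (x^2)^2 + (b + 1) * (x^2)^1 \<le> (x^2)^3 + C"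
      using mult_power_le_half_cube[of a "x^2" 2] mult_power_le_half_cube[of "b + 1" "x^2" 1] assms
      by (simp add: C_def)
    then have "-(x^6 - a * x^4 - b * x^2) \<le> C + -(x^2)"
      by (simp add: power_mult[symmetric] algebra_simps)
    then have exp_le: "exp (-(x^6 - a * x^4 - b * x^2)) \<le> exp C * exp (-(x^2))"
      by (simp add: exp_add[symmetric])
    show "norm (x^(2*n) * exp (-(x^6 - a * x^4 - b * x^2)))
                 \<le> norm (exp C * (x^(2*n) * exp (-(x^(2*1)))))"
      using mult_left_mono[OF exp_le, of "x^(2*n)"] by (simp add: abs_mult power_mult mult.left_commute)
  qed
qed simp

lemma sums_integral_dominated:
  fixes g h :: "nat \<Rightarrow> 'a \<Rightarrow> real"
  assumes g: "\<And>j. integrable M (g j)"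
    and g_sums: "\<And>x. (\<lambda>j. g j x) sums f x"
    and dominated: "\<And>j x. \<bar>g j x\<bar> \<le> h j x"
    and h_sums: "\<And>x. (\<lambda>j. h j x) sums H x"
    and H: "integrable M H"
  shows "integrable M f"
    and "(\<lambda>j. integral\<^sup>L M (g j)) sums integral\<^sup>L M f"
proof -
  have partial_sums: "(\<lambda>N. \<Sum>j<N. g j x) \<longlonglongrightarrow> f x" for x
    using g_sums by (simp add: sums_def)
  have partial_sums_borel: "(\<lambda>x. \<Sum>j<N. g j x) \<in> borel_measurable M" for N
    using g by (intro borel_measurable_sum borel_measurable_integrable)
  have f_borel: "f \<in> borel_measurable M"
    using partial_sums partial_sums_borel by (rule borel_measurable_LIMSEQ_real)
  have bound: "norm (\<Sum>j<N. g j x) \<le> H x" for N x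
  proof -
    have "norm (\<Sum>j<N. g j x) \<le> (\<Sum>j<N. h j x)"
      using dominated by (simp add: sum_abs[THEN order.trans] sum_mono)
    also have "\<dots> \<le> H x"
      using sum_le_suminf[OF sums_summable[OF h_sums]] dominated[THEN order.trans[OF abs_ge_zero]]
        sums_unique[OF h_sums] by simp
    finally show ?thesis .
  qed
  have AE_partial_sums: "AE x in M. (\<lambda>N. \<Sum>j<N. g j x) \<longlonglongrightarrow> f x"
    and AE_bound: "AE x in M. norm (\<Sum>j<N. g j x) \<le> H x" for N
    using partial_sums bound by simp_all
  note dominated_convergence = f_borel partial_sums_borel H AE_partial_sums AE_bound
  show "integrable M f"
    by (rule integrable_dominated_convergence[OF dominated_convergence])
  have "(\<lambda>N. integral\<^sup>L M (\<lambda>x. \<Sum>j<N. g j x)) \<longlonglongrightarrow> integral\<^sup>L M f"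
    by (rule integral_dominated_convergence[OF dominated_convergence])
  then show "(\<lambda>j. integral\<^sup>L M (g j)) sums integral\<^sup>L M f"
    using g by (simp add: sums_def Bochner_Integration.integral_sum)
qed

definition moment_term :: "nat \<Rightarrow> real \<Rightarrow> real \<Rightarrow> nat \<Rightarrow> real \<Rightarrow> real" where
  "moment_term n \<tau> \<kappa> j x =
     \<tau>^j * pair_coeff 0 j (\<kappa>^2 * \<tau>^3) * (x^(2*(n+2*j)) * exp (-(x^6)))
     - \<kappa> * \<tau>^(j+2) * pair_coeff 1 j (\<kappa>^2 * \<tau>^3) * (x^(2*(n+2*j+1)) * exp (-(x^6)))"

lemma moment_term_sums:
  "(\<lambda>j. moment_term n \<tau> \<kappa> j x)
     sums (x^(2*n) * exp (-(x^6 - \<tau> * x^4 + \<kappa> * \<tau>^2 * x^2)))"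
proof -
  have "x^(2*(n+2*j)) = x^(2*n) * (x^2)^(2*j)" "x^(2*(n+2*j+1)) = x^(2*n) * (x^2)^(2*j+1)" for j
    by (simp_all only: power_mult[symmetric] power_add[symmetric] distrib_left add.assoc)
  then have terms: "x^(2*n) * exp (-(x^6)) * (A * (x^2)^(2*j) - B * (x^2)^(2*j+1))
      = A * (x^(2*(n+2*j)) * exp (-(x^6))) - B * (x^(2*(n+2*j+1)) * exp (-(x^6)))" for A B j
    by (simp only:) (simp add: algebra_simps)
  have limit: "x^(2*n) * exp (-(x^6)) * exp (\<tau> * (x^2)^2 - \<kappa> * \<tau>^2 * x^2)
      = x^(2*n) * exp (-(x^6 - \<tau> * x^4 + \<kappa> * \<tau>^2 * x^2))"
    by (simp add: power_mult[symmetric] mult.assoc flip: exp_add)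
  show ?thesis
    using sums_mult[OF exp_quadratic_sums_pair_coeff, of "x^(2*n) * exp (-(x^6))" \<tau> \<kappa> "x^2"]
    unfolding moment_term_def terms limit by (simp only: mult.assoc)
qed

lemma abs_moment_term_le: "\<bar>moment_term n \<tau> \<kappa> j x\<bar> \<le> moment_term n \<bar>\<tau>\<bar> (-\<bar>\<kappa>\<bar>) j x"
proof -
  define m0 where "m0 = x^(2*(n+2*j)) * exp (-(x^6))"
  define m1 where "m1 = x^(2*(n+2*j+1)) * exp (-(x^6))"
  have "0 \<le> x^(2*k) * exp (-(x^6))" for k
    by (simp add: power_mult)
  then have m: "0 \<le> m0" "0 \<le> m1"
    unfolding m0_def m1_def by this+
  have coeff: "\<bar>pair_coeff r j (\<kappa>^2 * \<tau>^3)\<bar> \<le> pair_coeff r j ((-\<bar>\<kappa>\<bar>)^2 * \<bar>\<tau>\<bar>^3)" for r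
    using abs_pair_coeff_le[of r j "\<kappa>^2 * \<tau>^3"] by (simp add: abs_mult power_abs)
  have "\<bar>\<tau>^j * pair_coeff 0 j (\<kappa>^2 * \<tau>^3) * m0 - \<kappa> * \<tau>^(j+2) * pair_coeff 1 j (\<kappa>^2 * \<tau>^3) * m1\<bar>
      \<le> \<bar>\<tau>^j * pair_coeff 0 j (\<kappa>^2 * \<tau>^3)\<bar> * m0 + \<bar>\<kappa> * \<tau>^(j+2) * pair_coeff 1 j (\<kappa>^2 * \<tau>^3)\<bar> * m1"
    using m by (intro order.trans[OF abs_triangle_ineq4]) (simp add: abs_mult)
  also have "\<dots> \<le> \<bar>\<tau>\<bar>^j * pair_coeff 0 j ((-\<bar>\<kappa>\<bar>)^2 * \<bar>\<tau>\<bar>^3) * m0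
                 + \<bar>\<kappa>\<bar> * \<bar>\<tau>\<bar>^(j+2) * pair_coeff 1 j ((-\<bar>\<kappa>\<bar>)^2 * \<bar>\<tau>\<bar>^3) * m1"
    using m coeff by (intro add_mono mult_right_mono) (auto simp: abs_mult power_abs intro: mult_left_mono)
  finally show ?thesis
    by (simp add: moment_term_def m0_def m1_def)
qed

lemma integral_moment_term:
  shows "integrable lborel (moment_term n \<tau> \<kappa> j)"
    and "integral\<^sup>L lborel (moment_term n \<tau> \<kappa> j)
           = \<tau>^j * pair_coeff 0 j (\<kappa>^2 * \<tau>^3) * Gamma (2/3 * real j + real n / 3 + 1/6) / 3
             - \<kappa> * \<tau>^(j+2) * pair_coeff 1 j (\<kappa>^2 * \<tau>^3) * Gamma (2/3 * real j + real n / 3 + 1/2) / 3"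
proof -
  have moment: "integrable lborel (\<lambda>x::real. x^(2*k) * exp (-(x^6)))"
    "(\<integral>x. x^(2*k) * exp (-(x^6)) \<partial>lborel) = Gamma ((2 * real k + 1) / 6) / 3" for k
    using lborel_integral_power_exp_neg_even_power[of 3 k] by simp_all
  have moment0: "integrable lborel (\<lambda>x::real. c * (x^(2*(n+2*j)) * exp (-(x^6))))" for c
    using moment(1) by (rule integrable_mult_right)
  have moment1: "integrable lborel (\<lambda>x::real. c * (x^(2*(n+2*j+1)) * exp (-(x^6))))" for c
    using moment(1) by (rule integrable_mult_right)
  show "integrable lborel (moment_term n \<tau> \<kappa> j)"
    unfolding moment_term_def[abs_def] by (rule Bochner_Integration.integrable_diff[OF moment0 moment1])
  have "integral\<^sup>L lborel (moment_term n \<tau> \<kappa> j)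
      = \<tau>^j * pair_coeff 0 j (\<kappa>^2 * \<tau>^3) * (\<integral>x. x^(2*(n+2*j)) * exp (-(x^6)) \<partial>lborel)
        - \<kappa> * \<tau>^(j+2) * pair_coeff 1 j (\<kappa>^2 * \<tau>^3) * (\<integral>x. x^(2*(n+2*j+1)) * exp (-(x^6)) \<partial>lborel)"
    unfolding moment_term_def[abs_def]
    by (simp only: Bochner_Integration.integral_diff[OF moment0 moment1] integral_mult_right_zero)
  moreover have "(2 * real (n+2*j) + 1) / 6 = 2/3 * real j + real n / 3 + 1/6"
    "(2 * real (n+2*j+1) + 1) / 6 = 2/3 * real j + real n / 3 + 1/2"
    by (simp_all add: field_simps)
  ultimately show "integral\<^sup>L lborel (moment_term n \<tau> \<kappa> j)
           = \<tau>^j * pair_coeff 0 j (\<kappa>^2 * \<tau>^3) * Gamma (2/3 * real j + real n / 3 + 1/6) / 3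
             - \<kappa> * \<tau>^(j+2) * pair_coeff 1 j (\<kappa>^2 * \<tau>^3) * Gamma (2/3 * real j + real n / 3 + 1/2) / 3"
    by (simp only: moment(2))
qed

theorem theorem6p12:
  fixes \<tau> \<kappa> :: real and n :: nat
  defines "\<zeta> \<equiv> -(1/4) * \<kappa>^2 * \<tau>^3"
  shows "(\<lambda>j. (1/3) * (Gamma (2/3 * real j + real n / 3 + 1/6) / pochhammer (1/2) j * \<tau>^j * laguerre j (-1/2) \<zeta>
            - \<kappa> * Gamma (2/3 * real j + real n / 3 + 1/2) / pochhammer (3/2) j * \<tau>^(j+2) * laguerre j (1/2) \<zeta>))
         sums mu n \<tau> \<kappa>"
proof -
  have majorant_sums: "(\<lambda>j. moment_term n \<bar>\<tau>\<bar> (-\<bar>\<kappa>\<bar>) j x)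
      sums (x^(2*n) * exp (-(x^6 - \<bar>\<tau>\<bar> * x^4 - \<bar>\<kappa>\<bar> * \<tau>^2 * x^2)))" for x
    using moment_term_sums[of n "\<bar>\<tau>\<bar>" "-\<bar>\<kappa>\<bar>" x] by simp
  note term_by_term = sums_integral_dominated[OF integral_moment_term(1) moment_term_sums
      abs_moment_term_le majorant_sums
      integrable_power_exp_neg_sextic[OF abs_ge_zero mult_nonneg_nonneg[OF abs_ge_zero zero_le_power2]]]
  have laguerre_coeff: "laguerre j (-1/2) \<zeta> / pochhammer (1/2) j = pair_coeff 0 j (\<kappa>^2 * \<tau>^3)"
    "laguerre j (1/2) \<zeta> / pochhammer (3/2) j = pair_coeff 1 j (\<kappa>^2 * \<tau>^3)" for j
    using laguerre_minus_half_eq_pair_coeff laguerre_plus_half_eq_pair_coeff by (simp_all add: \<zeta>_def)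
  have "(1/3) * (Gamma (2/3 * real j + real n / 3 + 1/6) / pochhammer (1/2) j * \<tau>^j * laguerre j (-1/2) \<zeta>
          - \<kappa> * Gamma (2/3 * real j + real n / 3 + 1/2) / pochhammer (3/2) j * \<tau>^(j+2) * laguerre j (1/2) \<zeta>)
      = integral\<^sup>L lborel (moment_term n \<tau> \<kappa> j)" for j
    unfolding integral_moment_term(2) laguerre_coeff[symmetric] by (simp add: field_simps)
  moreover have "mu n \<tau> \<kappa> = (\<integral>x. x^(2*n) * exp (-(x^6 - \<tau> * x^4 + \<kappa> * \<tau>^2 * x^2)) \<partial>lborel)"
    unfolding mu_def by (rule integral_lborel[OF term_by_term(1)])
  ultimately show ?thesis
    using term_by_term(2) by simp
qed

end
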